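(* There is no semi-equivelar map of type $(3^2,4,3,6)$ (triangle, triangle, quadrilateral, triangle, hexagon around each vertex, in this cyclic order) on the closed surface of Euler characteristic $-1$. *)

theory Defs
  imports Main
begin

text \<open>Combinatorial maps on closed surfaces. A face is a polygon, given as a list of
  distinct vertices in cyclic order (at least 3). A map is a finite set of faces.\<close>

definition face_edges :: "'a list \<Rightarrow> 'a set set" where
  "face_edges f = {{f ! i, f ! (Suc i mod length f)} | i. i < length f}"

definition map_vertices :: "'a list set \<Rightarrow> 'a set" where
  "map_vertices F = \<Union> (set ` F)"

definition map_edges :: "'a list set \<Rightarrow> 'a set set" where
  "map_edges F = \<Union> (face_edges ` F)"

definition euler_char :: "'a list set \<Rightarrow> int" where
  "euler_char F = int (card (map_vertices F)) - int (card (map_edges F)) + int (card F)"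

text \<open>fs lists all faces through v in a cyclic order, consecutive faces sharing an edge
  through v (the link of v is a single cycle).\<close>
definition face_cycle_at :: "'a list set \<Rightarrow> 'a \<Rightarrow> 'a list list \<Rightarrow> bool" where
  "face_cycle_at F v fs \<longleftrightarrow> length fs \<ge> 3 \<and> distinct fs \<and> set fs = {f \<in> F. v \<in> set f} \<and>
     (\<forall>i < length fs. \<exists>u. {v, u} \<in> face_edges (fs ! i) \<inter> face_edges (fs ! (Suc i mod length fs)))"

definition closed_surface_map :: "'a list set \<Rightarrow> bool" where
  "closed_surface_map F \<longleftrightarrow> finite F \<and> F \<noteq> {} \<and>
     (\<forall>f\<in>F. distinct f \<and> length f \<ge> 3) \<and>
     (\<forall>f\<in>F. \<forall>g\<in>F. f \<noteq> g \<longrightarrow>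
        set f \<inter> set g = {} \<or> card (set f \<inter> set g) = 1 \<or>
        set f \<inter> set g \<in> face_edges f \<inter> face_edges g) \<and>
     (\<forall>e\<in>map_edges F. card {f \<in> F. e \<in> face_edges f} = 2) \<and>
     (\<forall>v\<in>map_vertices F. \<exists>fs. face_cycle_at F v fs) \<and>
     (\<forall>u\<in>map_vertices F. \<forall>w\<in>map_vertices F.
        (u, w) \<in> {(x, y). {x, y} \<in> map_edges F}\<^sup>*)"

definition semi_equivelar_of_type :: "'a list set \<Rightarrow> nat list \<Rightarrow> bool" where
  "semi_equivelar_of_type F t \<longleftrightarrow> closed_surface_map F \<and>
     (\<forall>v\<in>map_vertices F. \<exists>fs. face_cycle_at F v fs \<and>
        (\<exists>k. map length fs = rotate k t \<or> map length fs = rotate k (rev t)))"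

end

theory Submission
  imports Defs "HOL-Combinatorics.Cycles"
begin

text \<open>Euler's formula and the vertex type force twelve vertices and exactly two hexagons, and every
  vertex lies on exactly one of them. Around a vertex v the faces are hexagon, triangle, triangle,
  square, triangle; let s v be the other end of the edge between the hexagon and the first triangle,
  and X v the other end of the edge between the two triangles. Comparing the configurations at v,
  X v and s v shows that X is a fixed-point-free involution, that s rotates each hexagon by one
  step, and that the vertex opposite to v in its square is s (X (s (X v))). On the first hexagon the
  map to the opposite vertex is therefore the product of the two hexagon rotations and two copies of
  X, an even permutation; but it is a fixed-point-free involution of six points, hence odd.\<close>

section \<open>Polygons\<close>

lemma face_edges_conv_nth:
  "e \<in> face_edges f \<longleftrightarrow> (\<exists>i<length f. e = {f ! i, f ! (Suc i mod length f)})"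
  unfolding face_edges_def by auto

lemma face_edge_nbr_cases:
  assumes "distinct f" "i < length f" "{f ! i, u} \<in> face_edges f"
  shows "u = f ! (Suc i mod length f) \<or> u = f ! ((i + length f - 1) mod length f)"
proof -
  let ?n = "length f"
  obtain j where j: "j < ?n" and e: "{f ! i, u} = {f ! j, f ! (Suc j mod ?n)}"
    using assms(3) by (auto simp: face_edges_conv_nth)
  have inj: "a < ?n \<Longrightarrow> b < ?n \<Longrightarrow> f ! a = f ! b \<longleftrightarrow> a = b" for a b
    using assms(1) by (simp add: nth_eq_iff_index_eq)
  from e consider "f ! i = f ! j" "u = f ! (Suc j mod ?n)" | "f ! i = f ! (Suc j mod ?n)" "u = f ! j"
    by (auto simp: doubleton_eq_iff)
  then show ?thesis
  proof cases
    case 1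
    then show ?thesis using inj[OF assms(2) j] by simp
  next
    case 2
    moreover have "Suc j mod ?n < ?n" using j by (intro mod_less_divisor) linarith
    ultimately have "i = Suc j mod ?n" using inj[OF assms(2)] by simp
    then have "j = (i + ?n - 1) mod ?n" using j by (cases "Suc j = ?n") auto
    then show ?thesis using 2 by simp
  qed
qed

lemma face_edge_in_set:
  assumes "{a, b} \<in> face_edges f"
  shows "a \<in> set f \<and> b \<in> set f"
proof -
  obtain i where i: "i < length f" and e: "{a, b} = {f ! i, f ! (Suc i mod length f)}"
    using assms by (auto simp: face_edges_conv_nth)
  have "Suc i mod length f < length f" using i by (intro mod_less_divisor) linarith
  then show ?thesis using i e by (auto simp: doubleton_eq_iff)
qed

lemma face_edges_at_most_two_nbrs:
  assumes "distinct f" "{v, a} \<in> face_edges f" "{v, b} \<in> face_edges f" "{v, c} \<in> face_edges f"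
    and "a \<noteq> b"
  shows "c = a \<or> c = b"
proof -
  obtain i where i: "i < length f" and "v = f ! i"
    using face_edge_in_set[OF assms(2)] by (metis in_set_conv_nth)
  with face_edge_nbr_cases[OF assms(1) i] assms show ?thesis by metis
qed

lemma card_face_edges:
  assumes "distinct f" "length f \<ge> 3"
  shows "card (face_edges f) = length f"
proof -
  let ?n = "length f"
  let ?e = "\<lambda>i. {f ! i, f ! (Suc i mod ?n)}"
  have inj: "a < ?n \<Longrightarrow> b < ?n \<Longrightarrow> f ! a = f ! b \<longleftrightarrow> a = b" for a b
    using assms(1) by (simp add: nth_eq_iff_index_eq)
  have "inj_on ?e {..<?n}"
  proof (rule inj_onI)
    fix a b assume a: "a \<in> {..<?n}" and b: "b \<in> {..<?n}" and "?e a = ?e b"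
    then consider "f ! a = f ! b" | "f ! a = f ! (Suc b mod ?n)" "f ! (Suc a mod ?n) = f ! b"
      by (auto simp: doubleton_eq_iff)
    then show "a = b"
    proof cases
      case 2
      moreover have "Suc a mod ?n < ?n" "Suc b mod ?n < ?n" using a by (auto intro: mod_less_divisor)
      ultimately have "a = Suc b mod ?n" "Suc a mod ?n = b" using inj a b by simp_all
      then show ?thesis using a b assms(2) by (simp add: mod_Suc split: if_splits)
    qed (use inj a b in simp)
  qed
  moreover have "face_edges f = ?e ` {..<?n}" by (auto simp: face_edges_conv_nth)
  ultimately show ?thesis by (simp add: card_image)
qed

lemma card_face_edge_le: "e \<in> face_edges f \<Longrightarrow> card e \<le> 2"
  by (auto simp: face_edges_conv_nth card_insert_if)

lemma face_edge_neq:
  assumes "distinct f" "length f \<ge> 2" "{a, b} \<in> face_edges f"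
  shows "a \<noteq> b"
proof -
  obtain i where i: "i < length f" and e: "{a, b} = {f ! i, f ! (Suc i mod length f)}"
    using assms(3) by (auto simp: face_edges_conv_nth)
  have "i \<noteq> Suc i mod length f" using assms(2) i by (simp add: mod_Suc)
  moreover have "Suc i mod length f < length f" using i by (intro mod_less_divisor) linarith
  ultimately have "f ! i \<noteq> f ! (Suc i mod length f)"
    using assms(1) i by (simp add: nth_eq_iff_index_eq)
  then show ?thesis using e by (auto simp: doubleton_eq_iff)
qed

lemma triangle_set_eq:
  assumes "distinct f" "length f = 3" "a \<in> set f" "b \<in> set f" "c \<in> set f" "a \<noteq> b" "a \<noteq> c" "b \<noteq> c"
  shows "set f = {a, b, c}"
  using assms by (metis card_subset_eq distinct_card empty_subsetI finite_set insert_subset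
    card_3_iff)

lemma face_edges_conv_zip: "face_edges f = (\<lambda>(a, b). {a, b}) ` set (zip f (rotate1 f))"
  unfolding face_edges_def by (force simp: set_zip nth_rotate1)

lemma face_edges_4: "face_edges [a, b, c, d] = {{a, b}, {b, c}, {c, d}, {d, a}}"
  by (simp add: face_edges_conv_zip)

lemma face_edges_6:
  "face_edges [a, b, c, d, e, f] = {{a, b}, {b, c}, {c, d}, {d, e}, {e, f}, {f, a}}"
  by (simp add: face_edges_conv_zip)

text \<open>Since s never steps back, the direction it takes at a propagates around the hexagon.\<close>
lemma hexagon_successor_cases:
  assumes dist: "distinct [a, b, c, d, e, f]"
    and nb: "\<And>t. t \<in> {a, b, c, d, e, f} \<Longrightarrow> {t, s t} \<in> face_edges [a, b, c, d, e, f]"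
    and turn: "\<And>t. t \<in> {a, b, c, d, e, f} \<Longrightarrow> s (s t) \<noteq> t"
  shows "map s [a, b, c, d, e, f] = rotate1 [a, b, c, d, e, f]
    \<or> map s [a, f, e, d, c, b] = rotate1 [a, f, e, d, c, b]"
proof -
  let ?E = "face_edges [a, b, c, d, e, f]"
  have E: "{a, b} \<in> ?E" "{b, c} \<in> ?E" "{c, d} \<in> ?E" "{d, e} \<in> ?E" "{e, f} \<in> ?E" "{f, a} \<in> ?E"
    by (simp_all add: face_edges_6)
  then have E': "{b, a} \<in> ?E" "{c, b} \<in> ?E" "{d, c} \<in> ?E" "{e, d} \<in> ?E" "{f, e} \<in> ?E" "{a, f} \<in> ?E"
    by (simp_all add: insert_commute)
  have nbr: "s t = u \<or> s t = w"
    if "t \<in> {a, b, c, d, e, f}" "{t, u} \<in> ?E" "{t, w} \<in> ?E" "u \<noteq> w" for t u w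
    using face_edges_at_most_two_nbrs[OF dist that(2,3) nb[OF that(1)] that(4)] by blast
  have "s a = b \<or> s a = f" using nbr[OF _ E(1) E'(6)] dist by simp
  then show ?thesis
  proof
    assume "s a = b"
    moreover from this have "s b = c" using nbr[OF _ E'(1) E(2)] turn[of a] dist by auto
    moreover from this have "s c = d" using nbr[OF _ E'(2) E(3)] turn[of b] dist by auto
    moreover from this have "s d = e" using nbr[OF _ E'(3) E(4)] turn[of c] dist by auto
    moreover from this have "s e = f" using nbr[OF _ E'(4) E(5)] turn[of d] dist by auto
    moreover from this have "s f = a" using nbr[OF _ E'(5) E(6)] turn[of e] dist by auto
    ultimately show ?thesis by simp
  next
    assume "s a = f"
    moreover from this have "s f = e" using nbr[OF _ E(6) E'(5)] turn[of a] dist by auto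
    moreover from this have "s e = d" using nbr[OF _ E(5) E'(4)] turn[of f] dist by auto
    moreover from this have "s d = c" using nbr[OF _ E(4) E'(3)] turn[of e] dist by auto
    moreover from this have "s c = b" using nbr[OF _ E(3) E'(2)] turn[of d] dist by auto
    moreover from this have "s b = a" using nbr[OF _ E(2) E'(1)] turn[of c] dist by auto
    ultimately show ?thesis by simp
  qed
qed

section \<open>Cycles of faces around a vertex\<close>

lemma face_cycle_at_rotate:
  assumes "face_cycle_at F v fs"
  shows "face_cycle_at F v (rotate m fs)"
proof -
  let ?n = "length fs"
  have n: "?n \<ge> 3" using assms by (simp add: face_cycle_at_def)
  have rot: "rotate m fs ! j = fs ! ((m + j) mod ?n)" if "j < ?n" for j
    using that by (simp add: nth_rotate)
  have "(m + Suc i mod ?n) mod ?n = Suc ((m + i) mod ?n) mod ?n" for i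
    by (simp add: mod_add_right_eq mod_Suc_eq)
  moreover have "Suc i mod ?n < ?n" for i using n by (intro mod_less_divisor) linarith
  ultimately have "rotate m fs ! (Suc i mod ?n) = fs ! (Suc ((m + i) mod ?n) mod ?n)" for i
    using rot by metis
  moreover note rot
  moreover have "(m + i) mod ?n < ?n" for i using n by (intro mod_less_divisor) linarith
  ultimately show ?thesis using assms unfolding face_cycle_at_def by auto
qed

lemma rotate_to_type:
  fixes fs :: "'b list list"
  assumes "map length fs = rotate k t" "length t = 5"
  shows "map length (rotate (5 - k mod 5) fs) = t"
proof -
  have "(5 - k mod 5 + k) mod 5 = 0" by presburger
  then have "rotate (5 - k mod 5 + k) t = t" using assms(2) by (metis rotate_conv_mod rotate0 id_apply)
  then show ?thesis using assms(1) by (simp add: rotate_map[symmetric] rotate_rotate)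
qed

section \<open>Signs of permutations\<close>

lemma involution_permutes:
  assumes "\<And>x. p (p x) = x" "\<And>x. x \<notin> S \<Longrightarrow> p x = x"
  shows "p permutes S"
  unfolding permutes_def using assms by metis

lemma sign_cycle_of_list:
  "distinct cs \<Longrightarrow> sign (cycle_of_list cs) = (-1) ^ (length cs - 1)"
proof (induction cs rule: cycle_of_list.induct)
  case (1 i j cs)
  have "sign (cycle_of_list (i # j # cs)) = sign (transpose i j) * sign (cycle_of_list (j # cs))"
    by (simp add: sign_compose permutation_swap_id permutation_of_cycle)
  also have "\<dots> = - ((-1) ^ length cs)"
    using 1 by (simp add: sign_swap_id)
  finally show ?case by (simp del: cycle_of_list.simps)
qed simp_all

lemma cycle_of_list_eqI:
  assumes "distinct cs" "map g cs = rotate1 cs" "\<And>x. x \<notin> set cs \<Longrightarrow> g x = x"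
  shows "g = cycle_of_list cs"
proof
  fix x show "g x = cycle_of_list cs x"
  proof (cases "x \<in> set cs")
    case True
    have "map (cycle_of_list cs) cs = rotate1 cs"
      using cyclic_rotation[OF assms(1), of 1] by simp
    then show ?thesis using True assms(2) by (metis map_eq_conv)
  qed (simp add: assms(3) id_outside_supp)
qed

lemma transpose_comp_involution:
  assumes "\<And>x. p (p x) = x"
  shows "transpose a (p a) \<circ> p = (\<lambda>x. if x = a \<or> x = p a then x else p x)"
proof
  fix x
  have "p x = a \<longleftrightarrow> x = p a" "p x = p a \<longleftrightarrow> x = a" using assms by metis+
  then show "(transpose a (p a) \<circ> p) x = (if x = a \<or> x = p a then x else p x)"
    using assms by (auto simp: transpose_def)
qed

lemma sign_fixpoint_free_involution:
  assumes "finite S" "p permutes S" "\<forall>x\<in>S. p x \<noteq> x" "\<forall>x. p (p x) = x"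
  shows "sign p = (-1) ^ (card S div 2)"
  using assms
proof (induction "card S" arbitrary: S p rule: less_induct)
  case less
  show ?case
  proof (cases "S = {}")
    case True
    then show ?thesis using less.prems(2) by simp
  next
    case False
    then obtain a where a: "a \<in> S" by blast
    define b where "b = p a"
    have b: "b \<in> S" "b \<noteq> a"
      using a less.prems(2,3) permutes_in_image unfolding b_def by fastforce+
    define q where "q = (\<lambda>x. if x = a \<or> x = b then x else p x)"
    have pq: "p = transpose a b \<circ> q"
      using transpose_comp_involution[of p a] less.prems(4)
      by (simp add: q_def b_def fun_eq_iff transpose_def) metis
    have q_inv: "\<forall>x. q (q x) = x"
    proof
      fix x show "q (q x) = x"
      proof (cases "x = a \<or> x = b")
        case False
        then have "p x \<noteq> a" "p x \<noteq> b" using less.prems(4) unfolding b_def by metis+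
        then show ?thesis using False less.prems(4) by (simp add: q_def)
      qed (auto simp: q_def)
    qed
    have q_perm: "q permutes S - {a, b}"
      by (rule involution_permutes) (use q_inv less.prems(2) permutes_not_in in \<open>auto simp: q_def\<close>)
    have q_free: "\<forall>x\<in>S - {a, b}. q x \<noteq> x" using less.prems(3) by (simp add: q_def)
    have card: "card (S - {a, b}) = card S - 2" "card S \<ge> 2"
      using a b less.prems(1) card_mono[OF less.prems(1), of "{a, b}"] by (simp_all add: card_Diff_subset)
    have "sign q = (-1) ^ (card (S - {a, b}) div 2)"
      using less.hyps[OF _ _ q_perm q_free q_inv] card less.prems(1) by simp
    moreover have "sign p = - sign q"
    proof -
      have "permutation q" using q_perm less.prems(1) permutation_permutes by blast
      then show ?thesis unfolding pq using b(2) by (simp add: sign_compose permutation_swap_id sign_swap_id)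
    qed
    moreover have "card S div 2 = Suc (card (S - {a, b}) div 2)" using card by simp
    ultimately show ?thesis by simp
  qed
qed

lemma sign_restrict_rotate1:
  assumes "distinct cs" "map s cs = rotate1 cs"
  shows "permutation (\<lambda>x. if x \<in> set cs then s x else x)"
    and "sign (\<lambda>x. if x \<in> set cs then s x else x) = (-1) ^ (length cs - 1)"
proof -
  have "map (\<lambda>x. if x \<in> set cs then s x else x) cs = rotate1 cs"
    using assms(2) by (simp cong: map_cong)
  from cycle_of_list_eqI[OF assms(1) this]
  have "(\<lambda>x. if x \<in> set cs then s x else x) = cycle_of_list cs" by simp
  then show "permutation (\<lambda>x. if x \<in> set cs then s x else x)"
    and "sign (\<lambda>x. if x \<in> set cs then s x else x) = (-1) ^ (length cs - 1)"
    using permutation_of_cycle sign_cycle_of_list[OF assms(1)] by simp_all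
qed

section \<open>Maps of vertex type (3, 3, 4, 3, 6)\<close>

locale map_33436 =
  fixes F :: "'a list set"
  assumes semi_equivelar: "semi_equivelar_of_type F [3, 3, 4, 3, 6]"
begin

abbreviation V :: "'a set" where "V \<equiv> map_vertices F"

definition edge_faces :: "'a set \<Rightarrow> 'a list set" where
  "edge_faces e = {f \<in> F. e \<in> face_edges f}"

lemma closed_surface: "closed_surface_map F"
  using semi_equivelar unfolding semi_equivelar_of_type_def by blast

lemma finite_faces: "finite F"
  using closed_surface unfolding closed_surface_map_def by blast

lemma face_polygon: "f \<in> F \<Longrightarrow> distinct f \<and> length f \<ge> 3"
  using closed_surface unfolding closed_surface_map_def by blast

lemma finite_vertices: "finite V"
  unfolding map_vertices_def using finite_faces by auto

lemma face_vertex_in_V: "f \<in> F \<Longrightarrow> v \<in> set f \<Longrightarrow> v \<in> V"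
  unfolding map_vertices_def by auto

lemma face_edge_in_map_edges: "f \<in> F \<Longrightarrow> e \<in> face_edges f \<Longrightarrow> e \<in> map_edges F"
  unfolding map_edges_def by auto

lemma two_common_vertices_edge:
  assumes f: "f \<in> F" and g: "g \<in> F" and "f \<noteq> g" "a \<noteq> b"
    and "a \<in> set f" "a \<in> set g" "b \<in> set f" "b \<in> set g"
  shows "{a, b} \<in> face_edges f \<and> {a, b} \<in> face_edges g \<and> set f \<inter> set g = {a, b}"
proof -
  let ?I = "set f \<inter> set g"
  have sub: "{a, b} \<subseteq> ?I" and card_ab: "card {a, b} = 2" using assms by auto
  then have "card ?I \<ge> 2" using card_mono[of ?I "{a, b}"] by simp
  then have "?I \<in> face_edges f \<inter> face_edges g"
    using closed_surface f g \<open>f \<noteq> g\<close> unfolding closed_surface_map_def by fastforce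
  moreover from this have "card ?I \<le> 2" using card_face_edge_le by blast
  ultimately show ?thesis using card_subset_eq[OF _ sub] card_ab \<open>card ?I \<ge> 2\<close> by auto
qed

lemma no_three_common_vertices:
  assumes "f \<in> F" "g \<in> F" "f \<noteq> g" "a \<noteq> b" "a \<noteq> c" "b \<noteq> c"
    and "a \<in> set f" "a \<in> set g" "b \<in> set f" "b \<in> set g" "c \<in> set f" "c \<in> set g"
  shows False
  using two_common_vertices_edge[of f g a b] assms by auto

lemma card_edge_faces: "f \<in> F \<Longrightarrow> e \<in> face_edges f \<Longrightarrow> card (edge_faces e) = 2"
  using closed_surface face_edge_in_map_edges unfolding closed_surface_map_def edge_faces_def by blast

lemma edge_faces_eq:
  assumes "f \<in> F" "g \<in> F" "f \<noteq> g" "e \<in> face_edges f" "e \<in> face_edges g"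
  shows "edge_faces e = {f, g}"
proof -
  have "{f, g} \<subseteq> edge_faces e" using assms by (auto simp: edge_faces_def)
  moreover have "card (edge_faces e) = card {f, g}" using assms card_edge_faces by simp
  moreover have "finite (edge_faces e)" using finite_faces by (simp add: edge_faces_def)
  ultimately show ?thesis by (metis card_subset_eq)
qed

definition vertex_star ::
    "'a \<Rightarrow> 'a list \<Rightarrow> 'a list \<Rightarrow> 'a list \<Rightarrow> 'a list \<Rightarrow> 'a list \<Rightarrow> 'a \<Rightarrow> 'a \<Rightarrow> 'a \<Rightarrow> 'a \<Rightarrow> 'a \<Rightarrow> bool"
  where "vertex_star v g0 g1 g2 g3 g4 w0 w1 w2 w3 w4 \<longleftrightarrow>
    {f \<in> F. v \<in> set f} = {g0, g1, g2, g3, g4} \<and> distinct [g0, g1, g2, g3, g4] \<and>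
    edge_faces {v, w0} = {g0, g1} \<and> edge_faces {v, w1} = {g1, g2} \<and> edge_faces {v, w2} = {g2, g3} \<and>
    edge_faces {v, w3} = {g3, g4} \<and> edge_faces {v, w4} = {g4, g0} \<and>
    (\<forall>g w. g \<in> F \<longrightarrow> {v, w} \<in> face_edges g \<longrightarrow> w \<in> {w0, w1, w2, w3, w4})"

lemma vertex_star_rotate:
  "vertex_star v g0 g1 g2 g3 g4 w0 w1 w2 w3 w4 \<Longrightarrow> vertex_star v g1 g2 g3 g4 g0 w1 w2 w3 w4 w0"
  unfolding vertex_star_def by (auto simp: insert_commute)

lemma vertex_star_reverse:
  "vertex_star v g0 g1 g2 g3 g4 w0 w1 w2 w3 w4 \<Longrightarrow> vertex_star v g0 g4 g3 g2 g1 w4 w3 w2 w1 w0"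
  unfolding vertex_star_def by (auto simp: insert_commute)

lemma vertex_star_of_face_cycle:
  assumes cyc: "face_cycle_at F v [f0, f1, f2, f3, f4]"
  shows "\<exists>u0 u1 u2 u3 u4. vertex_star v f0 f1 f2 f3 f4 u0 u1 u2 u3 u4"
proof -
  let ?fs = "[f0, f1, f2, f3, f4]"
  have dist: "distinct ?fs" and faces: "{f \<in> F. v \<in> set f} = {f0, f1, f2, f3, f4}"
    using cyc unfolding face_cycle_at_def by auto
  have adj: "\<exists>u. {v, u} \<in> face_edges (?fs ! i) \<inter> face_edges (?fs ! (Suc i mod 5))" if "i < 5" for i
    using cyc that unfolding face_cycle_at_def by auto
  obtain u0 u1 u2 u3 u4 where
    u0: "{v, u0} \<in> face_edges f0" "{v, u0} \<in> face_edges f1" and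
    u1: "{v, u1} \<in> face_edges f1" "{v, u1} \<in> face_edges f2" and
    u2: "{v, u2} \<in> face_edges f2" "{v, u2} \<in> face_edges f3" and
    u3: "{v, u3} \<in> face_edges f3" "{v, u3} \<in> face_edges f4" and
    u4: "{v, u4} \<in> face_edges f4" "{v, u4} \<in> face_edges f0"
    using adj[of 0] adj[of 1] adj[of 2] adj[of 3] adj[of 4] by auto
  have inF: "f0 \<in> F" "f1 \<in> F" "f2 \<in> F" "f3 \<in> F" "f4 \<in> F" using faces by auto
  have E: "edge_faces {v, u0} = {f0, f1}" "edge_faces {v, u1} = {f1, f2}"
    "edge_faces {v, u2} = {f2, f3}" "edge_faces {v, u3} = {f3, f4}" "edge_faces {v, u4} = {f4, f0}"
    using edge_faces_eq[OF inF(1,2) _ u0] edge_faces_eq[OF inF(2,3) _ u1] edge_faces_eq[OF inF(3,4) _ u2]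
      edge_faces_eq[OF inF(4,5) _ u3] edge_faces_eq[OF inF(5,1) _ u4] dist by auto
  have "w \<in> {u0, u1, u2, u3, u4}" if g: "g \<in> F" and w: "{v, w} \<in> face_edges g" for g w
  proof -
    have "g \<in> {f0, f1, f2, f3, f4}" using faces g face_edge_in_set[OF w] by auto
    moreover have "u0 \<noteq> u1" "u1 \<noteq> u2" "u2 \<noteq> u3" "u3 \<noteq> u4" "u4 \<noteq> u0"
      using E dist by (auto simp: doubleton_eq_iff)
    ultimately show ?thesis
      using face_edges_at_most_two_nbrs[of g v u4 u0 w] face_edges_at_most_two_nbrs[of g v u0 u1 w]
        face_edges_at_most_two_nbrs[of g v u1 u2 w] face_edges_at_most_two_nbrs[of g v u2 u3 w]
        face_edges_at_most_two_nbrs[of g v u3 u4 w] u0 u1 u2 u3 u4 w face_polygon[OF g] by auto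
  qed
  then show ?thesis unfolding vertex_star_def using faces dist E by blast
qed

definition vertex_config ::
    "'a \<Rightarrow> 'a list \<Rightarrow> 'a list \<Rightarrow> 'a list \<Rightarrow> 'a list \<Rightarrow> 'a list \<Rightarrow> 'a \<Rightarrow> 'a \<Rightarrow> 'a \<Rightarrow> 'a \<Rightarrow> 'a \<Rightarrow> bool"
  where "vertex_config v H A B S C p x y z q \<longleftrightarrow> vertex_star v H A B S C p x y z q \<and>
    length H = 6 \<and> length A = 3 \<and> length B = 3 \<and> length S = 4 \<and> length C = 3"

lemma vertex_config_exists:
  assumes "v \<in> V"
  shows "\<exists>H A B S C p x y z q. vertex_config v H A B S C p x y z q"
proof -
  obtain fs k where cyc: "face_cycle_at F v fs"
    and lk: "map length fs = rotate k [3, 3, 4, 3, 6] \<or> map length fs = rotate k [6, 3, 4, 3, 3]"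
    using semi_equivelar assms unfolding semi_equivelar_of_type_def by fastforce
  define gs where "gs = rotate (5 - k mod 5) fs"
  have cyc': "face_cycle_at F v gs" unfolding gs_def using cyc by (rule face_cycle_at_rotate)
  have types: "map length gs = [3, 3, 4, 3, 6] \<or> map length gs = [6, 3, 4, 3, 3]"
    unfolding gs_def using lk rotate_to_type[of fs k "[3, 3, 4, 3, 6]"] rotate_to_type[of fs k "[6, 3, 4, 3, 3]"]
    by auto
  then obtain f0 f1 f2 f3 f4 where gs: "gs = [f0, f1, f2, f3, f4]"
    by (auto simp: length_Suc_conv numeral_eq_Suc dest!: arg_cong[of _ _ length])
  obtain u0 u1 u2 u3 u4 where st: "vertex_star v f0 f1 f2 f3 f4 u0 u1 u2 u3 u4"
    using vertex_star_of_face_cycle cyc' gs by blast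
  from types show ?thesis
  proof
    assume "map length gs = [3, 3, 4, 3, 6]"
    then show ?thesis
      using vertex_star_rotate[OF vertex_star_rotate[OF vertex_star_rotate[OF vertex_star_rotate[OF st]]]] gs
      unfolding vertex_config_def by fastforce
  next
    assume "map length gs = [6, 3, 4, 3, 3]"
    then show ?thesis using vertex_star_reverse[OF st] gs unfolding vertex_config_def by fastforce
  qed
qed

lemma vertex_configD:
  assumes "vertex_config v H A B S C p x y z q"
  shows config_faces_in: "H \<in> F" "A \<in> F" "B \<in> F" "S \<in> F" "C \<in> F"
    and config_vertex_in: "v \<in> set H" "v \<in> set A" "v \<in> set B" "v \<in> set S" "v \<in> set C"
    and config_length: "length H = 6" "length A = 3" "length B = 3" "length S = 4" "length C = 3"
    and config_faces_distinct: "H \<noteq> A" "H \<noteq> B" "H \<noteq> S" "H \<noteq> C" "A \<noteq> B" "A \<noteq> S" "A \<noteq> C"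
      "B \<noteq> S" "B \<noteq> C" "S \<noteq> C"
    and config_edge_faces: "edge_faces {v, p} = {H, A}" "edge_faces {v, x} = {A, B}"
      "edge_faces {v, y} = {B, S}" "edge_faces {v, z} = {S, C}" "edge_faces {v, q} = {C, H}"
    and config_faces_at: "{f \<in> F. v \<in> set f} = {H, A, B, S, C}"
    and config_nbrs: "\<And>g w. g \<in> F \<Longrightarrow> {v, w} \<in> face_edges g \<Longrightarrow> w \<in> {p, x, y, z, q}"
  using assms unfolding vertex_config_def vertex_star_def by auto

lemma config_edges:
  assumes "vertex_config v H A B S C p x y z q"
  shows "{v, p} \<in> face_edges H" "{v, p} \<in> face_edges A" "{v, x} \<in> face_edges A"
    "{v, x} \<in> face_edges B" "{v, y} \<in> face_edges B" "{v, y} \<in> face_edges S"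
    "{v, z} \<in> face_edges S" "{v, z} \<in> face_edges C" "{v, q} \<in> face_edges C" "{v, q} \<in> face_edges H"
  using config_edge_faces[OF assms] unfolding edge_faces_def by blast+

lemma config_nbrs_distinct:
  assumes c: "vertex_config v H A B S C p x y z q"
  shows "p \<noteq> x" "p \<noteq> y" "p \<noteq> z" "p \<noteq> q" "x \<noteq> y" "x \<noteq> z" "x \<noteq> q" "y \<noteq> z" "y \<noteq> q" "z \<noteq> q"
    and "p \<noteq> v" "x \<noteq> v" "y \<noteq> v" "z \<noteq> v" "q \<noteq> v"
proof -
  show "p \<noteq> x" "p \<noteq> y" "p \<noteq> z" "p \<noteq> q" "x \<noteq> y" "x \<noteq> z" "x \<noteq> q" "y \<noteq> z" "y \<noteq> q" "z \<noteq> q"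
    using config_edge_faces[OF c] config_faces_distinct[OF c] by (auto simp: doubleton_eq_iff)
  have "distinct f" "length f \<ge> 2" if "f \<in> {H, A, B, S, C}" for f
    using that config_faces_in[OF c] face_polygon[of f] by auto
  then show "p \<noteq> v" "x \<noteq> v" "y \<noteq> v" "z \<noteq> v" "q \<noteq> v"
    using face_edge_neq config_edges[OF c] by (metis insertI1 insertI2)+
qed

lemma config_triangles:
  assumes c: "vertex_config v H A B S C p x y z q"
  shows "set A = {v, p, x}" "set B = {v, x, y}" "set C = {v, z, q}"
proof -
  note e = config_edges[OF c] and u = config_nbrs_distinct[OF c] and l = config_length[OF c]
  have "distinct A" "distinct B" "distinct C" using face_polygon config_faces_in[OF c] by auto
  then show "set A = {v, p, x}" "set B = {v, x, y}" "set C = {v, z, q}"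
    using triangle_set_eq face_edge_in_set[OF e(2)] face_edge_in_set[OF e(3)]
      face_edge_in_set[OF e(4)] face_edge_in_set[OF e(5)] face_edge_in_set[OF e(8)]
      face_edge_in_set[OF e(9)] l u by metis+
qed

lemma config_in_V:
  assumes c: "vertex_config v H A B S C p x y z q"
  shows "v \<in> V" "p \<in> V" "x \<in> V" "y \<in> V" "z \<in> V" "q \<in> V"
  using config_edges[OF c] config_faces_in[OF c] face_edge_in_set face_vertex_in_V by metis+

lemma config_square:
  assumes c: "vertex_config v H A B S C p x y z q"
  obtains w where "set S = {v, y, z, w}" "w \<notin> {v, y, z}"
proof -
  obtain a b d e where S: "S = [a, b, d, e]"
    using config_length(4)[OF c] by (auto simp: length_Suc_conv numeral_eq_Suc)
  have "distinct S" using face_polygon config_faces_in(4)[OF c] by blast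
  moreover have "{v, y} \<in> face_edges S" "{v, z} \<in> face_edges S" "y \<noteq> z" "v \<noteq> y" "v \<noteq> z"
    using config_edges[OF c] config_nbrs_distinct[OF c] by auto
  ultimately have "\<exists>w. set S = {v, y, z, w} \<and> w \<notin> {v, y, z}"
    unfolding S face_edges_4 by (auto simp: doubleton_eq_iff insert_commute)
  then show ?thesis using that by blast
qed

lemma faces_at_vertex:
  assumes "v \<in> V"
  shows "card {f \<in> F. v \<in> set f} = 5"
    and "card {f \<in> F. length f = 6 \<and> v \<in> set f} = 1"
    and "card {f \<in> F. length f = 4 \<and> v \<in> set f} = 1"
    and "card {f \<in> F. length f = 3 \<and> v \<in> set f} = 3"
proof -
  obtain H A B S C p x y z q where c: "vertex_config v H A B S C p x y z q"
    using vertex_config_exists[OF assms] by blast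
  note at = config_faces_at[OF c] and l = config_length[OF c] and d = config_faces_distinct[OF c]
  have "{f \<in> F. length f = 6 \<and> v \<in> set f} = {H}" "{f \<in> F. length f = 4 \<and> v \<in> set f} = {S}"
    "{f \<in> F. length f = 3 \<and> v \<in> set f} = {A, B, C}"
  proof -
    have "{f \<in> F. length f = L \<and> v \<in> set f} = {f \<in> {H, A, B, S, C}. length f = L}" for L
      using at by blast
    then show "{f \<in> F. length f = 6 \<and> v \<in> set f} = {H}" "{f \<in> F. length f = 4 \<and> v \<in> set f} = {S}"
      "{f \<in> F. length f = 3 \<and> v \<in> set f} = {A, B, C}"
      using l by auto
  qed
  then show "card {f \<in> F. v \<in> set f} = 5"
    and "card {f \<in> F. length f = 6 \<and> v \<in> set f} = 1"
    and "card {f \<in> F. length f = 4 \<and> v \<in> set f} = 1"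
    and "card {f \<in> F. length f = 3 \<and> v \<in> set f} = 3"
    using at l d by (auto simp: card_insert_if)
qed

lemma face_length_cases: "f \<in> F \<Longrightarrow> length f = 3 \<or> length f = 4 \<or> length f = 6"
proof -
  assume f: "f \<in> F"
  then obtain v where v: "v \<in> set f" using face_polygon[OF f] by (cases f) auto
  then obtain H A B S C p x y z q where c: "vertex_config v H A B S C p x y z q"
    using vertex_config_exists[OF face_vertex_in_V[OF f v]] by blast
  then have "f \<in> {H, A, B, S, C}" using config_faces_at[OF c] f v by blast
  then show ?thesis using config_length[OF c] by auto
qed

lemma card_polygons:
  assumes "L \<in> {3, 4, 6}"
  shows "L * card {f \<in> F. length f = L} = (if L = 3 then 3 else 1) * card V"
proof -
  let ?P = "{f \<in> F. length f = L}"
  have "card {f \<in> ?P. v \<in> set f} = (if L = 3 then 3 else 1)" if "v \<in> V" for v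
  proof -
    have "{f \<in> ?P. v \<in> set f} = {f \<in> F. length f = L \<and> v \<in> set f}" by auto
    then show ?thesis using faces_at_vertex[OF that] assms by auto
  qed
  then have "(\<Sum>f\<in>?P. card {v \<in> V. v \<in> set f}) = (if L = 3 then 3 else 1) * card V"
    using finite_faces finite_vertices by (intro sum_multicount) auto
  moreover have "card {v \<in> V. v \<in> set f} = L" if "f \<in> ?P" for f
  proof -
    have "{v \<in> V. v \<in> set f} = set f" using that face_vertex_in_V by auto
    then show ?thesis using that face_polygon by (simp add: distinct_card)
  qed
  ultimately show ?thesis by (simp add: mult.commute)
qed

lemma card_map_edges: "2 * card (map_edges F) = 5 * card V"
proof -
  have fin: "finite (map_edges F)"
    unfolding map_edges_def face_edges_def using finite_faces by auto
  have "(\<Sum>f\<in>F. card {e \<in> map_edges F. e \<in> face_edges f}) = 2 * card (map_edges F)"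
    using fin finite_faces card_edge_faces unfolding map_edges_def edge_faces_def
    by (intro sum_multicount) auto
  moreover have "(\<Sum>f\<in>F. card {v \<in> V. v \<in> set f}) = 5 * card V"
    using finite_faces finite_vertices faces_at_vertex(1) by (intro sum_multicount) auto
  moreover have "card {e \<in> map_edges F. e \<in> face_edges f} = card {v \<in> V. v \<in> set f}" if "f \<in> F" for f
  proof -
    have "{e \<in> map_edges F. e \<in> face_edges f} = face_edges f" "{v \<in> V. v \<in> set f} = set f"
      using that face_edge_in_map_edges face_vertex_in_V by auto
    then show ?thesis using face_polygon[OF that] by (simp add: card_face_edges distinct_card)
  qed
  ultimately show ?thesis by simp
qed

lemma card_faces:
  "card F = card {f \<in> F. length f = 3} + card {f \<in> F. length f = 4} + card {f \<in> F. length f = 6}"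
proof -
  have "F = {f \<in> F. length f = 3} \<union> {f \<in> F. length f = 4} \<union> {f \<in> F. length f = 6}"
    using face_length_cases by auto
  then have "card F = card ({f \<in> F. length f = 3} \<union> {f \<in> F. length f = 4} \<union> {f \<in> F. length f = 6})"
    by simp
  also have "\<dots> = card {f \<in> F. length f = 3} + card {f \<in> F. length f = 4} + card {f \<in> F. length f = 6}"
    using finite_faces by (subst card_Un_disjoint; auto)+
  finally show ?thesis .
qed

lemma two_hexagons_if_euler_char:
  assumes "euler_char F = -1"
  shows "card {f \<in> F. length f = 6} = 2"
proof -
  have "int (card V) - int (card (map_edges F)) + int (card F) = -1"
    using assms unfolding euler_char_def by simp
  then show ?thesis using card_polygons[of 3] card_polygons[of 4] card_polygons[of 6] card_map_edges card_faces
    by simp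
qed

lemma vertex_labelling_exists:
  obtains hex tri1 tri2 sq tri3 :: "'a \<Rightarrow> 'a list" and s X y z q :: "'a \<Rightarrow> 'a" where
    "\<And>v. v \<in> V \<Longrightarrow> vertex_config v (hex v) (tri1 v) (tri2 v) (sq v) (tri3 v) (s v) (X v) (y v) (z v) (q v)"
proof -
  have "\<forall>v\<in>V. \<exists>c. case c of (H, A, B, S, C, p, x, y, z, q) \<Rightarrow> vertex_config v H A B S C p x y z q"
  proof
    fix v assume "v \<in> V"
    then obtain H A B S C p x y z q where "vertex_config v H A B S C p x y z q"
      by (metis vertex_config_exists)
    then show "\<exists>c. case c of (H, A, B, S, C, p, x, y, z, q) \<Rightarrow> vertex_config v H A B S C p x y z q"
      by (intro exI[of _ "(H, A, B, S, C, p, x, y, z, q)"]) simp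
  qed
  from bchoice[OF this] obtain c
    where c: "\<forall>v\<in>V. case c v of (H, A, B, S, C, p, x, y, z, q) \<Rightarrow> vertex_config v H A B S C p x y z q"
    by blast
  show thesis
  proof (rule that)
    fix v assume "v \<in> V"
    then show "vertex_config v (fst (c v)) (fst (snd (c v))) (fst (snd (snd (c v))))
      (fst (snd (snd (snd (c v))))) (fst (snd (snd (snd (snd (c v)))))) (fst (snd (snd (snd (snd (snd (c v)))))))
      (fst (snd (snd (snd (snd (snd (snd (c v))))))))
      (fst (snd (snd (snd (snd (snd (snd (snd (c v)))))))))
      (fst (snd (snd (snd (snd (snd (snd (snd (snd (c v))))))))))
      (snd (snd (snd (snd (snd (snd (snd (snd (snd (c v))))))))))"
      using c by (auto split: prod.splits)
  qed
qed

end

section \<open>Euler characteristic -1: two hexagons\<close>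

locale two_hexagons = map_33436 +
  fixes H1 H2 :: "'a list"
  assumes hexagons: "{f \<in> F. length f = 6} = {H1, H2}" and hexagons_distinct: "H1 \<noteq> H2"
begin

lemma hexagon_faces: "H1 \<in> F" "H2 \<in> F" "length H1 = 6" "length H2 = 6"
  using hexagons by auto

lemma hexagon_vertices_subset: "set H1 \<subseteq> V" "set H2 \<subseteq> V"
  using hexagon_faces face_vertex_in_V by auto

lemma in_one_hexagon:
  assumes "v \<in> V"
  shows "v \<in> set H1 \<longleftrightarrow> v \<notin> set H2"
proof -
  have "{f \<in> F. length f = 6 \<and> v \<in> set f} = {f \<in> {H1, H2}. v \<in> set f}"
    using hexagons by blast
  then have "card {f \<in> {H1, H2}. v \<in> set f} = 1" using faces_at_vertex(2)[OF assms] by simp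
  moreover have "{f \<in> {H1, H2}. v \<in> set f} = {H1, H2}" if "v \<in> set H1" "v \<in> set H2"
    using that by auto
  moreover have "card {f \<in> {H1, H2}. v \<in> set f} = 0" if "v \<notin> set H1" "v \<notin> set H2"
    using that by auto
  ultimately show ?thesis using hexagons_distinct by (cases "v \<in> set H1"; cases "v \<in> set H2") simp_all
qed

lemma config_hexagon:
  assumes "vertex_config v H A B S C p x y z q"
  shows "H = H1 \<or> H = H2"
  using config_faces_in(1)[OF assms] config_length(1)[OF assms] hexagons by blast

lemma config_hexagon_unique:
  assumes c: "vertex_config v H A B S C p x y z q" and "K = H1 \<or> K = H2" and "v \<in> set K"
  shows "K = H"
proof -
  have "K \<in> {H, A, B, S, C}" using assms hexagon_faces config_faces_at[OF c] by auto
  moreover have "length K = 6" using assms hexagon_faces by auto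
  ultimately show ?thesis using config_length[OF c] by auto
qed

lemma other_hexagon:
  assumes "H = H1 \<or> H = H2"
  obtains K where "K = H1 \<or> K = H2" "K \<noteq> H" "set K = V - set H"
proof -
  have "set H2 = V - set H1" "set H1 = V - set H2"
    using in_one_hexagon hexagon_vertices_subset by blast+
  then show ?thesis using that assms hexagons_distinct by metis
qed

lemma config_hexagon_nbrs:
  assumes c: "vertex_config v H A B S C p x y z q"
  shows "p \<in> set H" "q \<in> set H" "x \<notin> set H" "y \<notin> set H" "z \<notin> set H"
proof -
  note e = config_edges[OF c] and u = config_nbrs_distinct[OF c] and inF = config_faces_in[OF c]
    and d = config_faces_distinct[OF c] and E = config_edge_faces[OF c]
    and vin = config_vertex_in[OF c] and tri = config_triangles[OF c]
  show p: "p \<in> set H" and "q \<in> set H" using face_edge_in_set[OF e(1)] face_edge_in_set[OF e(10)] by auto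
  show "x \<notin> set H"
    using no_three_common_vertices[OF inF(2,1) d(1)[symmetric], of v p x] u vin p tri(1) by auto
  show "y \<notin> set H"
  proof
    assume "y \<in> set H"
    then have "{v, y} \<in> face_edges H"
      using two_common_vertices_edge[OF inF(3,1) d(2)[symmetric], of v y] u vin tri(2) by auto
    then show False using E(3) inF d unfolding edge_faces_def by auto
  qed
  show "z \<notin> set H"
  proof
    assume "z \<in> set H"
    then have "{v, z} \<in> face_edges H"
      using two_common_vertices_edge[OF inF(5,1) d(4)[symmetric], of v z] u vin tri(3) by auto
    then show False using E(4) inF d unfolding edge_faces_def by auto
  qed
qed

lemma config_across_triangle_edge:
  assumes c: "vertex_config v H A B S C p x y z q"
    and c': "vertex_config x H' A' B' S' C' p' x' y' z' q'"
  shows "x' = v" "p' = y" "y' = p" "A' = B" "B' = A" "edge_faces {x, p} = {A, S'}"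
proof -
  note hn = config_hexagon_nbrs[OF c] and hn' = config_hexagon_nbrs[OF c']
  note u = config_nbrs_distinct[OF c] and u' = config_nbrs_distinct[OF c']
  note tri = config_triangles[OF c] and tri' = config_triangles[OF c']
  note E = config_edge_faces[OF c] and E' = config_edge_faces[OF c']
  note L = config_length[OF c] and L' = config_length[OF c']
  obtain K where K: "K = H1 \<or> K = H2" "K \<noteq> H" "set K = V - set H"
    by (rule other_hexagon[OF config_hexagon[OF c]])
  have "K = H'"
    using config_hexagon_unique[OF c' K(1)] K(3) config_in_V(3)[OF c] hn(3) by blast
  then have H': "set H' = V - set H" using K(3) by simp
  have vp: "v \<in> set H" "p \<in> set H" using config_vertex_in(1)[OF c] hn(1) by auto
  have "A \<in> {H', A', B', S', C'}" using config_faces_at[OF c'] config_faces_in(2)[OF c] tri(1) by auto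
  moreover have "A \<noteq> H'" "A \<noteq> S'" using L L' by auto
  moreover have "A \<noteq> A'"
  proof
    assume "A = A'"
    then have "p' \<in> {v, p, x}" using tri tri' by auto
    then show False using hn'(1) H' vp u'(11) by auto
  qed
  moreover have "A \<noteq> C'"
  proof
    assume "A = C'"
    then have "q' \<in> {v, p, x}" using tri tri' by auto
    then show False using hn'(2) H' vp u'(15) by auto
  qed
  ultimately have AB': "A = B'" by auto
  then have "{x', y'} = {v, p}" using tri tri' u u' by (auto simp: doubleton_eq_iff)
  moreover have "x' \<noteq> p"
  proof
    assume "x' = p"
    then have "y' = v" using \<open>{x', y'} = {v, p}\<close> u by (auto simp: doubleton_eq_iff)
    then have "edge_faces {v, x} = {A, S'}" using E'(3) AB' by (simp add: insert_commute)
    then have "S' = B" using E(2) config_faces_distinct[OF c] by (auto simp: doubleton_eq_iff)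
    then show False using L L' by simp
  qed
  ultimately show xv: "x' = v" and yp: "y' = p" using u by (auto simp: doubleton_eq_iff)
  have "edge_faces {v, x} = {A', A}" using E'(2) AB' xv by (simp add: insert_commute)
  then show AB: "A' = B" using E(2) config_faces_distinct[OF c'] AB' by (auto simp: doubleton_eq_iff)
  show "B' = A" using AB' by simp
  have "{x, p', v} = {v, x, y}" using tri'(1) tri(2) AB xv by simp
  then show "p' = y" using u u' xv by (auto simp: doubleton_eq_iff insert_commute)
  show "edge_faces {x, p} = {A, S'}" using E'(3) AB' yp by simp
qed

lemma config_across_hexagon_edge:
  assumes c: "vertex_config v H A B S C p x y z q"
    and cx: "vertex_config x Hx Ax Bx Sx Cx px xx yx zx qx"
    and cp: "vertex_config p H' A' B' S' C' p' x' y' z' q'"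
  shows "q' = v" "z' = x" "C' = A"
proof -
  note hn = config_hexagon_nbrs[OF c] and hn' = config_hexagon_nbrs[OF cp]
  note u' = config_nbrs_distinct[OF cp]
  note tri = config_triangles[OF c] and tri' = config_triangles[OF cp]
  note L = config_length[OF c] and L' = config_length[OF cp]
  have HH': "H' = H" using config_hexagon_unique[OF cp config_hexagon[OF c] hn(1)] by simp
  have vH: "v \<in> set H" using config_vertex_in(1)[OF c] .
  have "A \<in> {H', A', B', S', C'}" using config_faces_at[OF cp] config_faces_in(2)[OF c] tri(1) by auto
  moreover have "A \<noteq> H'" "A \<noteq> S'" using L L' by auto
  moreover have "A \<noteq> B'"
  proof
    assume "A = B'"
    then have "x' \<in> {v, p, x}" "y' \<in> {v, p, x}" using tri tri' by auto
    moreover have "x' \<noteq> v" "y' \<noteq> v" using hn'(3,4) HH' vH by auto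
    ultimately show False using u' by auto
  qed
  moreover have "A \<noteq> A'"
  proof
    assume AA: "A = A'"
    then have "x' \<in> {v, p, x}" using tri tri' by auto
    moreover have "x' \<noteq> v" using hn'(3) HH' vH by auto
    ultimately have "x' = x" using u' by auto
    then have "edge_faces {p, x} = {A, B'}" using config_edge_faces(2)[OF cp] AA by simp
    moreover have "edge_faces {p, x} = {A, Sx}"
      using config_across_triangle_edge(6)[OF c cx] by (simp add: insert_commute)
    ultimately have "B' = Sx" using config_faces_distinct[OF cp] AA by (auto simp: doubleton_eq_iff)
    then show False using L' config_length(4)[OF cx] by simp
  qed
  ultimately show AC: "C' = A" by auto
  have "z' \<in> {v, p, x}" "q' \<in> {v, p, x}" using tri tri' AC by auto
  moreover have "z' \<noteq> v" "q' \<noteq> x" using hn'(2,5) HH' vH hn(3) by auto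
  ultimately show "z' = x" "q' = v" using u' by auto
qed

lemma config_opposite_square:
  assumes c: "vertex_config v H A B S C p x y z q"
    and w: "set S = {v, y, z, w}" "w \<notin> {v, y, z}"
    and cw: "vertex_config w H' A' B' S' C' p' x' y' z' q'"
  shows "w \<in> set H" "H' = H" "S' = S" "{y', z'} = {y, z}"
proof -
  note hn = config_hexagon_nbrs[OF c] and hn' = config_hexagon_nbrs[OF cw]
  have SF: "S \<in> F" using config_faces_in(4)[OF c] .
  obtain K where K: "K = H1 \<or> K = H2" "K \<noteq> H" "set K = V - set H"
    using other_hexagon[OF config_hexagon[OF c]] by blast
  have yzK: "y \<in> set K" "z \<in> set K" using K hn config_in_V[OF c] by auto
  show wH: "w \<in> set H"
  proof (rule ccontr)
    assume "w \<notin> set H"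
    then have "w \<in> set K" using K face_vertex_in_V[OF SF] w by auto
    moreover have "K \<in> F" "S \<noteq> K" using K hexagon_faces config_length(4)[OF c] by auto
    ultimately show False
      using no_three_common_vertices[OF SF \<open>K \<in> F\<close>, of y z w] w yzK config_nbrs_distinct(8)[OF c] by auto
  qed
  show HH': "H' = H" using config_hexagon_unique[OF cw config_hexagon[OF c] wH] by simp
  have "S \<in> {H', A', B', S', C'}" using config_faces_at[OF cw] SF w by auto
  then show SS': "S' = S" using config_length[OF c] config_length[OF cw] by auto
  have "y' \<in> set S" "z' \<in> set S"
    using face_edge_in_set[OF config_edges(6)[OF cw]] face_edge_in_set[OF config_edges(7)[OF cw]] SS' by auto
  moreover have "y' \<notin> set H" "z' \<notin> set H" using hn' HH' by auto
  ultimately have "y' \<in> {y, z}" "z' \<in> {y, z}" using w wH config_vertex_in(1)[OF c] by auto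
  then show "{y', z'} = {y, z}" using config_nbrs_distinct(8)[OF cw] by auto
qed

end

section \<open>Vertex labellings and the parity contradiction\<close>

text \<open>A choice of configuration at every vertex; s and X are the maps of the proof idea.\<close>
locale vertex_labelling = two_hexagons +
  fixes hex tri1 tri2 sq tri3 :: "'a \<Rightarrow> 'a list" and s X y z q :: "'a \<Rightarrow> 'a"
  assumes config:
    "v \<in> V \<Longrightarrow> vertex_config v (hex v) (tri1 v) (tri2 v) (sq v) (tri3 v) (s v) (X v) (y v) (z v) (q v)"
begin

lemma s_in_V: "v \<in> V \<Longrightarrow> s v \<in> V" and X_in_V: "v \<in> V \<Longrightarrow> X v \<in> V"
  using config_in_V[OF config] by auto

lemma X_X: "v \<in> V \<Longrightarrow> X (X v) = v" and s_X: "v \<in> V \<Longrightarrow> s (X v) = y v"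
  using config_across_triangle_edge[OF config config[OF X_in_V]] by auto

lemma q_s: "v \<in> V \<Longrightarrow> q (s v) = v" and z_s: "v \<in> V \<Longrightarrow> z (s v) = X v"
  using config_across_hexagon_edge[OF config config[OF X_in_V] config[OF s_in_V]] by auto

lemma s_s_neq: "v \<in> V \<Longrightarrow> s (s v) \<noteq> v"
  using config_nbrs_distinct(4)[OF config[OF s_in_V]] q_s by simp

lemma inj_on_s: "inj_on s V"
  by (rule inj_onI) (metis q_s)

lemma s_image: "s ` V = V"
  using endo_inj_surj[OF finite_vertices _ inj_on_s] s_in_V by blast

lemma hexagon_at:
  assumes "v \<in> V" "K = H1 \<or> K = H2" "v \<in> set K"
  shows "hex v = K"
  using config_hexagon_unique[OF config] assms by metis

lemma s_in_hexagon: "v \<in> V \<Longrightarrow> K = H1 \<or> K = H2 \<Longrightarrow> v \<in> set K \<Longrightarrow> s v \<in> set K"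
  using hexagon_at config_hexagon_nbrs(1)[OF config] by metis

lemma X_notin_hexagon: "v \<in> V \<Longrightarrow> K = H1 \<or> K = H2 \<Longrightarrow> v \<in> set K \<Longrightarrow> X v \<notin> set K"
  using hexagon_at config_hexagon_nbrs(3)[OF config] by metis

text \<open>By square_fourth_vertex, this is the vertex opposite to v in its square.\<close>
definition opposite :: "'a \<Rightarrow> 'a" where
  "opposite v = s (X (s (X v)))"

lemma square_fourth_vertex:
  assumes v: "v \<in> V" and w: "set (sq v) = {v, y v, z v, w}" "w \<notin> {v, y v, z v}"
  shows "w = opposite v"
proof -
  have wV: "w \<in> V" using w face_vertex_in_V[OF config_faces_in(4)[OF config[OF v]]] by auto
  note sq = config_opposite_square[OF config[OF v] w config[OF wV]]
  have "y w \<noteq> y v"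
  proof
    assume "y w = y v"
    then have "s (X w) = s (X v)" using s_X v wV by simp
    then have "X w = X v" using inj_on_s X_in_V v wV by (meson inj_onD)
    then have "w = v" using X_X[OF v] X_X[OF wV] by metis
    then show False using w(2) by simp
  qed
  then have "z w = y v" using sq(4) by (auto simp: doubleton_eq_iff)
  obtain u where u: "u \<in> V" "w = s u" using s_image wV by blast
  then have "X u = y v" using z_s \<open>z w = y v\<close> by simp
  then have "u = X (s (X v))" using X_X[OF u(1)] s_X[OF v] by metis
  then show ?thesis using u(2) unfolding opposite_def by simp
qed

lemma opposite_square:
  assumes v: "v \<in> V"
  shows opposite_in_hexagon: "opposite v \<in> set (hex v)"
    and opposite_neq: "opposite v \<noteq> v"
    and opposite_opposite: "opposite (opposite v) = v"
proof -
  obtain w where w: "set (sq v) = {v, y v, z v, w}" "w \<notin> {v, y v, z v}"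
    using config_square[OF config[OF v]] by blast
  then have ow: "opposite v = w" using square_fourth_vertex[OF v] by simp
  have wV: "w \<in> V" using w face_vertex_in_V[OF config_faces_in(4)[OF config[OF v]]] by auto
  note sq = config_opposite_square[OF config[OF v] w config[OF wV]]
  show "opposite v \<in> set (hex v)" "opposite v \<noteq> v" using ow sq(1) w(2) by auto
  have "set (sq w) = {w, y w, z w, v}" using sq(3,4) w(1) by (auto simp: insert_commute)
  moreover have "v \<notin> {w, y w, z w}"
    using sq(4) w(2) config_nbrs_distinct(13,14)[OF config[OF v]] by auto
  ultimately show "opposite (opposite v) = v" using square_fourth_vertex[OF wV] ow by simp
qed

lemma hexagon_rotation:
  assumes K: "K = H1 \<or> K = H2"
  shows "permutation (\<lambda>v. if v \<in> set K then s v else v)"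
    and "sign (\<lambda>v. if v \<in> set K then s v else v) = -1"
proof -
  obtain a b c d e f where Kl: "K = [a, b, c, d, e, f]"
    using K hexagon_faces by (auto simp: length_Suc_conv numeral_eq_Suc)
  have dist: "distinct [a, b, c, d, e, f]" using K Kl face_polygon hexagon_faces by metis
  have KV: "set K \<subseteq> V" using K hexagon_vertices_subset by auto
  have nb: "{t, s t} \<in> face_edges [a, b, c, d, e, f]" if "t \<in> {a, b, c, d, e, f}" for t
    using config_edges(1)[OF config] hexagon_at[OF _ K] that KV Kl by (metis list.set subsetD)
  have turn: "s (s t) \<noteq> t" if "t \<in> {a, b, c, d, e, f}" for t
    using s_s_neq that KV Kl by auto
  from hexagon_successor_cases[OF dist nb turn]
  obtain cs where cs: "distinct cs" "length cs = 6" "set cs = set K" "map s cs = rotate1 cs"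
  proof
    assume "map s [a, b, c, d, e, f] = rotate1 [a, b, c, d, e, f]"
    then show thesis using that[of "[a, b, c, d, e, f]"] dist Kl by simp
  next
    assume m: "map s [a, f, e, d, c, b] = rotate1 [a, f, e, d, c, b]"
    have "distinct [a, f, e, d, c, b]" "set [a, f, e, d, c, b] = set K" using dist Kl by auto
    then show thesis by (intro that[OF _ _ _ m]) simp_all
  qed
  then show "permutation (\<lambda>v. if v \<in> set K then s v else v)"
    and "sign (\<lambda>v. if v \<in> set K then s v else v) = -1"
    using sign_restrict_rotate1[OF cs(1,4)] by simp_all
qed

lemma opposite_eq_comp:
  "(\<lambda>v. if v \<in> set H1 then opposite v else v) =
    (\<lambda>v. if v \<in> set H1 then s v else v) \<circ> (\<lambda>v. if v \<in> V then X v else v) \<circ>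
    (\<lambda>v. if v \<in> set H2 then s v else v) \<circ> (\<lambda>v. if v \<in> V then X v else v)"
proof
  fix v
  have H: "u \<in> set H1 \<longleftrightarrow> u \<notin> set H2" if "u \<in> V" for u using in_one_hexagon that by blast
  have HV: "u \<in> V" if "u \<in> set H1 \<or> u \<in> set H2" for u using that hexagon_vertices_subset by auto
  show "(if v \<in> set H1 then opposite v else v) = ((\<lambda>v. if v \<in> set H1 then s v else v) \<circ>
    (\<lambda>v. if v \<in> V then X v else v) \<circ> (\<lambda>v. if v \<in> set H2 then s v else v) \<circ>
    (\<lambda>v. if v \<in> V then X v else v)) v"
  proof (cases "v \<in> set H1")
    case True
    then have v: "v \<in> V" using HV by blast
    then have X2: "X v \<in> set H2" using H X_notin_hexagon[OF v _ True] X_in_V by blast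
    then have s2: "s (X v) \<in> set H2" using s_in_hexagon X_in_V[OF v] by blast
    then have X1: "X (s (X v)) \<in> set H1"
      using H X_notin_hexagon[OF _ _ s2] X_in_V s_in_V X_in_V[OF v] by blast
    show ?thesis using True v X2 s2 X1 X_in_V[OF v] s_in_V[OF X_in_V[OF v]]
      unfolding opposite_def by simp
  next
    case False
    show ?thesis
    proof (cases "v \<in> V")
      case True
      then have "v \<in> set H2" using H False by blast
      then have "X v \<notin> set H2" using X_notin_hexagon[OF True] by blast
      then show ?thesis using False True X_X[OF True] X_in_V[OF True] by simp
    next
      case outside: False
      then show ?thesis using False HV by auto
    qed
  qed
qed

lemma inconsistent: False
proof -
  let ?opp = "\<lambda>v. if v \<in> set H1 then opposite v else v"
  let ?X = "\<lambda>v. if v \<in> V then X v else v"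
  have "?X permutes V" by (rule involution_permutes) (auto simp: X_X X_in_V)
  then have "permutation ?X" using finite_vertices permutation_permutes by blast
  then have "sign ?opp = sign ?X * sign ?X"
    using hexagon_rotation[of H1] hexagon_rotation[of H2] opposite_eq_comp
    by (simp add: sign_compose permutation_compose)
  then have "sign ?opp = 1" by simp
  moreover have "sign ?opp = (-1) ^ (card (set H1) div 2)"
  proof (rule sign_fixpoint_free_involution)
    show "\<forall>v. ?opp (?opp v) = v"
    proof
      fix v show "?opp (?opp v) = v"
      proof (cases "v \<in> set H1")
        case True
        then have v: "v \<in> V" using hexagon_vertices_subset by auto
        then have "hex v = H1" using hexagon_at True by blast
        then show ?thesis using opposite_in_hexagon[OF v] opposite_opposite[OF v] True by simp
      qed simp
    qed
    then show "?opp permutes set H1" by (intro involution_permutes) auto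
    show "\<forall>v\<in>set H1. ?opp v \<noteq> v" using opposite_neq hexagon_vertices_subset by auto
  qed simp
  moreover have "card (set H1) = 6" using face_polygon hexagon_faces by (simp add: distinct_card)
  ultimately show False by simp
qed

end

theorem lemma4p2:
  fixes F :: "'a list set"
  shows "\<not> (semi_equivelar_of_type F [3, 3, 4, 3, 6] \<and> euler_char F = -1)"
proof
  assume F: "semi_equivelar_of_type F [3, 3, 4, 3, 6] \<and> euler_char F = -1"
  then interpret map_33436 F by unfold_locales blast
  obtain H1 H2 where "{f \<in> F. length f = 6} = {H1, H2}" "H1 \<noteq> H2"
    using two_hexagons_if_euler_char F by (auto simp: card_2_iff)
  then interpret two_hexagons F H1 H2 by unfold_locales
  obtain hex tri1 tri2 sq tri3 s X y z q where
    "\<And>v. v \<in> V \<Longrightarrow> vertex_config v (hex v) (tri1 v) (tri2 v) (sq v) (tri3 v) (s v) (X v) (y v) (z v) (q v)"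
    using vertex_labelling_exists by blast
  then interpret vertex_labelling F H1 H2 hex tri1 tri2 sq tri3 s X y z q by unfold_locales
  show False by (rule inconsistent)
qed

end
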